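(* Let $\mathcal{D}\subset\mathbb{R}^2$ be open and bounded, $\mathcal{K}=\{0,1,2\}$, $\boldsymbol{\phi}=(\phi_0,\phi_1,\phi_2)\in\mathcal{C}^\infty(\mathbb{R}^2,\mathbb{R}^3)$ with $\phi_0\equiv0$. Let $\hat x\in\mathcal{E}_{\mathcal{K}}(\boldsymbol{\phi})$ and assume $D\widehat{\boldsymbol{\phi}}_{\mathcal{K}}(\hat x)$ is invertible. Then, with the angles $\beta_0,\beta_1,\beta_2$ at $\hat x$ defined below, $\max_{k\in\mathcal{K}}\beta_k<\pi$ and $\min_{k\in\mathcal{K}}\beta_k>0$.
   Context: For $j\in\mathcal{K}$, $\Omega_j(\boldsymbol{\phi})=\operatorname{int}\{x\in\mathcal{D}\mid\phi_j(x)\le\phi_m(x)\ \forall m\ne j\}$; for $\mathcal{I}\subset\mathcal{K}$, $\mathcal{E}_{\mathcal{I}}(\boldsymbol{\phi})=\bigcap_{j\in\mathcal{I}}\partial\Omega_j(\boldsymbol{\phi})$; $\widehat{\boldsymbol{\phi}}_{\mathcal{K}}=(\phi_0-\phi_1,\phi_0-\phi_2)$. For $\mathcal{I}\in\{\{0,1\},\{1,2\},\{0,2\}\}$, $\mathbb{D}_{\mathcal{I}}$ denotes the half-tangent to the curve $\mathcal{E}_{\mathcal{I}}(\boldsymbol{\phi})$ at the triple point $\hat x$. Using polar coordinates centered at $\hat x$ with angle $\vartheta\in[0,2\pi]$, $\vartheta=0$ along $\mathbb{D}_{\{0,2\}}$, let $\vartheta_0$ be the angle of $\mathbb{D}_{\{0,1\}}$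 and $\vartheta_1$ that of $\mathbb{D}_{\{1,2\}}$, where the labels of $\phi_0$ and $\phi_2$ (and of the corresponding phases) are exchanged if necessary so that $\vartheta_0\le\vartheta_1$. Then $\beta_0=\vartheta_0$, $\beta_1=\vartheta_1-\vartheta_0$, $\beta_2=2\pi-\vartheta_1$ (so $\beta_0+\beta_1+\beta_2=2\pi$). *)

theory Defs
  imports "HOL-Analysis.Analysis"
begin

definition Kset :: "nat set" where "Kset = {0,1,2}"

text \<open>C-infinity regularity of a real function on the plane (coinductively:
 differentiable everywhere, and every partial derivative is again C-infinity).\<close>
coinductive smooth2 :: "(real^2 \<Rightarrow> real) \<Rightarrow> bool" where
  "(\<forall>x. g differentiable (at x)) \<Longrightarrow>
   (\<forall>i. smooth2 (\<lambda>x. frechet_derivative g (at x) (axis i 1))) \<Longrightarrow> smooth2 g"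

definition Omega :: "(real^2) set \<Rightarrow> (nat \<Rightarrow> real^2 \<Rightarrow> real) \<Rightarrow> nat \<Rightarrow> (real^2) set" where
  "Omega D phi j = interior {x \<in> D. \<forall>m\<in>Kset. m \<noteq> j \<longrightarrow> phi j x \<le> phi m x}"

definition Eset :: "(real^2) set \<Rightarrow> (nat \<Rightarrow> real^2 \<Rightarrow> real) \<Rightarrow> nat set \<Rightarrow> (real^2) set" where
  "Eset D phi I = (\<Inter>j\<in>I. frontier (Omega D phi j))"

definition phihat :: "(nat \<Rightarrow> real^2 \<Rightarrow> real) \<Rightarrow> real^2 \<Rightarrow> real^2" where
  "phihat phi x = vector [phi 0 x - phi 1 x, phi 0 x - phi 2 x]"

definition half_tangent :: "(real^2) set \<Rightarrow> real^2 \<Rightarrow> real^2 \<Rightarrow> bool" where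
  "half_tangent S p d \<longleftrightarrow> norm d = 1 \<and> p islimpt S \<and>
     ((\<lambda>x. (1 / norm (x - p)) *\<^sub>R (x - p)) \<longlongrightarrow> d) (at p within S)"

definition to_cplx :: "real^2 \<Rightarrow> complex" where
  "to_cplx v = Complex (v $ 1) (v $ 2)"

definition polar_angle :: "real^2 \<Rightarrow> real^2 \<Rightarrow> real" where
  "polar_angle u v = Arg2pi (to_cplx v / to_cplx u)"

text \<open>The angles beta_0, beta_1, beta_2 at the triple point, given the half-tangent
 directions d01, d12, d02.  theta = 0 along d02; the labels 0 and 2 are exchanged
 if necessary so that theta_0 <= theta_1, i.e. theta_0/theta_1 are the min/max of the
 polar angles of d01 and d12.\<close>
definition betas :: "real^2 \<Rightarrow> real^2 \<Rightarrow> real^2 \<Rightarrow> real \<times> real \<times> real" where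
  "betas d01 d12 d02 =
    (let a = polar_angle d02 d01; b = polar_angle d02 d12;
         t0 = min a b; t1 = max a b
     in (t0, t1 - t0, 2 * pi - t1))"

end

theory Submission
  imports Defs
begin

text \<open>Since phi 0 = 0, phihat phi = (- phi 1, - phi 2), and phi j x is the j-th potential of the
  linear model at the point phihat phi x.  Hence the phase Omega j is the interior of the preimage,
  under phihat phi, of a fixed closed sector of the plane, and the interface of the phases j and k
  is contained in the preimage of the half-line spanned by r = (0, -1), (1, 1) or (-1, 0) for
  {j, k} = {0, 1}, {1, 2} or {0, 2}.  By the inverse function theorem phihat phi is a local
  homeomorphism at xhat, where it vanishes, so near xhat each interface is exactly that preimage
  and its half-tangent is the direction of Li r, Li being the inverse of the derivative.  The three
  vectors r sum to zero and two of them are independent, so the same holds for their images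
  under Li; three such directions are never contained in a closed half-plane, which says that
  each of the angles between consecutive ones lies strictly between 0 and pi.\<close>

section \<open>Three directions summing to zero\<close>

lemma Im_mult_cnj_Arg2pi: "Im (w * cnj z) = norm w * norm z * sin (Arg2pi w - Arg2pi z)"
proof -
  have "Im (w * cnj z) = Im ((of_real (norm w) * exp (\<i> * of_real (Arg2pi w))) *
      cnj (of_real (norm z) * exp (\<i> * of_real (Arg2pi z))))"
    using Arg2pi_eq[of w] Arg2pi_eq[of z] by simp
  also have "\<dots> = norm w * norm z * sin (Arg2pi w - Arg2pi z)"
    by (simp add: cis_conv_exp[symmetric] sin_diff algebra_simps)
  finally show ?thesis .
qed

lemma Arg2pi_of_zero_sum:
  fixes z w :: complex
  assumes sum: "z + w + 1 = 0" and Imz: "Im z > 0"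
  shows "0 < Arg2pi z" "Arg2pi z < pi" "pi < Arg2pi w" "Arg2pi w - Arg2pi z < pi"
proof -
  show z: "0 < Arg2pi z" "Arg2pi z < pi"
    using Imz Arg2pi_lt_pi by blast+
  have w: "w = - 1 - z"
    using sum by (auto simp: complex_eq_iff)
  then show "pi < Arg2pi w"
    using Imz Arg2pi_le_pi[of w] by simp
  have "Im (w * cnj z) = Im z"
    by (simp add: w algebra_simps)
  then have "0 < norm w * norm z * sin (Arg2pi w - Arg2pi z)"
    using Imz Im_mult_cnj_Arg2pi[of w z] by linarith
  then have "sin (Arg2pi w - Arg2pi z) > 0"
    by (smt (verit) mult_nonneg_nonneg norm_ge_zero zero_less_mult_iff)
  then show "Arg2pi w - Arg2pi z < pi"
    using sin_le_zero[of "Arg2pi w - Arg2pi z"] z Arg2pi[of w] by linarith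
qed

lemma to_cplx_zero [simp]: "to_cplx 0 = 0"
  by (simp add: to_cplx_def complex_eq_iff)

lemma to_cplx_add [simp]: "to_cplx (u + v) = to_cplx u + to_cplx v"
  by (simp add: to_cplx_def complex_eq_iff)

lemma to_cplx_scaleR [simp]: "to_cplx (t *\<^sub>R v) = of_real t * to_cplx v"
  by (simp add: to_cplx_def complex_eq_iff)

lemma to_cplx_eq_iff [simp]: "to_cplx u = to_cplx v \<longleftrightarrow> u = v"
  by (simp add: to_cplx_def complex_eq_iff vec_eq_iff forall_2)

lemma to_cplx_eq_0_iff [simp]: "to_cplx v = 0 \<longleftrightarrow> v = 0"
  by (simp add: to_cplx_def complex_eq_iff vec_eq_iff forall_2)

lemma to_cplx_sgn: "to_cplx (sgn v) = of_real (1 / norm v) * to_cplx v"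
  by (simp add: sgn_div_norm to_cplx_scaleR divide_inverse)

lemma polar_angle_sgn: "polar_angle (sgn u) (sgn v) = polar_angle u v"
proof (cases "u = 0 \<or> v = 0")
  case True
  then show ?thesis
    by (auto simp: polar_angle_def)
next
  case False
  then have "polar_angle (sgn u) (sgn v) = Arg2pi (of_real (norm u / norm v) * (to_cplx v / to_cplx u))"
    by (simp add: polar_angle_def to_cplx_sgn field_simps)
  also have "\<dots> = polar_angle u v"
    using False by (subst Arg2pi_times_of_real) (simp_all add: polar_angle_def)
  finally show ?thesis .
qed

lemma betas_sgn: "betas (sgn a) (sgn b) (sgn c) = betas a b c"
  by (simp add: betas_def polar_angle_sgn)

lemma betas_bounds_of_zero_sum:
  fixes a b c :: "real^2"
  assumes sum: "a + b + c = 0" and "c \<noteq> 0" and "a \<notin> span {c}"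
  shows "case betas a b c of (b0, b1, b2) \<Rightarrow>
           max b0 (max b1 b2) < pi \<and> min b0 (min b1 b2) > 0"
proof -
  define z where "z = to_cplx a / to_cplx c"
  define w where "w = to_cplx b / to_cplx c"
  have c: "to_cplx c \<noteq> 0"
    using \<open>c \<noteq> 0\<close> by simp
  have zw: "z + w + 1 = 0"
    using arg_cong[OF sum, of to_cplx] c by (simp add: z_def w_def field_simps)
  have "Im z \<noteq> 0"
  proof
    assume "Im z = 0"
    then have "to_cplx a = to_cplx (Re z *\<^sub>R c)"
      using c by (simp add: z_def complex_is_Real_iff field_simps)
    then have "a = Re z *\<^sub>R c"
      by (simp only: to_cplx_eq_iff)
    then show False
      using \<open>a \<notin> span {c}\<close> by (auto simp: span_singleton)
  qed
  then consider "Im z > 0" | "Im w > 0"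
    using arg_cong[OF zw, of Im] by fastforce
  then have "min (Arg2pi z) (Arg2pi w) < pi \<and> max (Arg2pi z) (Arg2pi w) > pi \<and>
      max (Arg2pi z) (Arg2pi w) - min (Arg2pi z) (Arg2pi w) < pi \<and> min (Arg2pi z) (Arg2pi w) > 0"
  proof cases
    case 1
    show ?thesis using Arg2pi_of_zero_sum[OF zw 1] by linarith
  next
    case 2
    have wz: "w + z + 1 = 0" using zw by (simp add: add.commute)
    show ?thesis using Arg2pi_of_zero_sum[OF wz 2] by linarith
  qed
  moreover have "max (Arg2pi z) (Arg2pi w) < 2 * pi"
    using Arg2pi[of z] Arg2pi[of w] by linarith
  ultimately show ?thesis
    by (simp add: betas_def polar_angle_def z_def w_def Let_def)
qed

lemma betas_junction_directions:
  fixes f :: "real^2 \<Rightarrow> real^2"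
  assumes "linear f" and "inj f"
  shows "case betas (sgn (f (vector [0, -1]))) (sgn (f (vector [1, 1]))) (sgn (f (vector [-1, 0]))) of
           (b0, b1, b2) \<Rightarrow> max b0 (max b1 b2) < pi \<and> min b0 (min b1 b2) > 0"
proof -
  let ?a = "f (vector [0, -1])" and ?b = "f (vector [1, 1])" and ?c = "f (vector [-1, 0])"
  have "?a + ?b + ?c = f (vector [0, -1] + vector [1, 1] + vector [-1, 0])"
    using assms(1) by (simp add: linear_add)
  also have "\<dots> = f 0"
    by (rule arg_cong[where f = f]) (simp add: vec_eq_iff forall_2)
  also have "\<dots> = 0"
    using assms(1) by (rule linear_0)
  finally have sum: "?a + ?b + ?c = 0" .
  have "?c \<noteq> 0"
  proof
    assume "?c = 0"
    then have "?c = f 0"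
      using linear_0[OF assms(1)] by simp
    then have "(vector [-1, 0] :: real^2) = 0"
      by (rule injD[OF assms(2)])
    then show False
      by (simp add: vec_eq_iff forall_2)
  qed
  moreover have "?a \<notin> span {?c}"
  proof
    assume "?a \<in> span {?c}"
    then obtain t where "?a = t *\<^sub>R ?c"
      by (auto simp: span_singleton)
    then have "?a = f (t *\<^sub>R vector [-1, 0])"
      using linear_scale[OF assms(1)] by simp
    then have "(vector [0, -1] :: real^2) = t *\<^sub>R vector [-1, 0]"
      by (rule injD[OF assms(2)])
    then show False
      by (simp add: vec_eq_iff forall_2)
  qed
  ultimately show ?thesis
    using betas_bounds_of_zero_sum[OF sum] by (simp add: betas_sgn)
qed

section \<open>Half-tangents of preimages of half-lines\<close>

lemma norm_sub_sgn_le: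
  fixes u v :: "'a::real_normed_vector"
  assumes "norm u = 1" and "c \<ge> 0"
  shows "norm (u - sgn v) \<le> 2 * norm (c *\<^sub>R v - u)"
proof (cases "v = 0")
  case True
  then show ?thesis
    using assms norm_triangle_ineq3[of u 0] by simp
next
  case False
  have "norm (c *\<^sub>R v - sgn v) = \<bar>c * norm v - 1\<bar>"
  proof -
    have "c *\<^sub>R v - sgn v = (c * norm v - 1) *\<^sub>R sgn v"
      using False by (simp add: sgn_div_norm algebra_simps)
    then show ?thesis
      using False by (simp add: norm_sgn)
  qed
  also have "\<dots> = \<bar>norm (c *\<^sub>R v) - norm u\<bar>"
    using assms by simp
  also have "\<dots> \<le> norm (c *\<^sub>R v - u)"
    by (rule norm_triangle_ineq3)
  finally have "norm (c *\<^sub>R v - sgn v) \<le> norm (c *\<^sub>R v - u)" .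
  moreover have "norm (u - sgn v) \<le> norm (u - c *\<^sub>R v) + norm (c *\<^sub>R v - sgn v)"
    using norm_triangle_ineq[of "u - c *\<^sub>R v" "c *\<^sub>R v - sgn v"] by simp
  ultimately show ?thesis
    by (simp add: norm_minus_commute)
qed

text \<open>Applying Li to the first-order expansion of F at x \<in> S gives
  k Li r = (x - p) + norm (x - p) e x with k \<ge> 0 and e x \<rightarrow> 0, so after normalisation
  sgn (x - p) is within 2 norm (e x) of sgn (Li r).\<close>

lemma tendsto_sgn_diff_of_ray_preimage:
  fixes F :: "'a::real_normed_vector \<Rightarrow> 'b::real_normed_vector"
  assumes F: "(F has_derivative L) (at p within S)" "F p = 0"
    and Li: "bounded_linear Li" "\<And>h. Li (L h) = h"
    and ray: "\<And>x. x \<in> S \<Longrightarrow> \<exists>k\<ge>0. F x = k *\<^sub>R r"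
  shows "((\<lambda>x. sgn (x - p)) \<longlongrightarrow> sgn (Li r)) (at p within S)"
proof -
  define e where "e x = Li ((F x - L (x - p)) /\<^sub>R norm (x - p))" for x
  have "((\<lambda>x. (F x - L (x - p)) /\<^sub>R norm (x - p)) \<longlongrightarrow> 0) (at p within S)"
    using F by (simp add: has_derivative_at_within)
  then have e: "(e \<longlongrightarrow> 0) (at p within S)"
    unfolding e_def using bounded_linear.tendsto_zero[OF Li(1)] by blast
  have "norm (sgn (x - p) - sgn (Li r)) \<le> 2 * norm (e x)" if "x \<in> S" "x \<noteq> p" for x
  proof -
    obtain k where k: "k \<ge> 0" "F x = k *\<^sub>R r"
      using ray \<open>x \<in> S\<close> by blast
    have "k *\<^sub>R Li r = (x - p) + norm (x - p) *\<^sub>R e x"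
      using bounded_linear.linear[OF Li(1)] Li(2) k \<open>x \<noteq> p\<close>
      by (simp add: e_def linear_scale linear_diff)
    then have "inverse (norm (x - p)) *\<^sub>R (k *\<^sub>R Li r) =
        inverse (norm (x - p)) *\<^sub>R (x - p) + e x"
      using \<open>x \<noteq> p\<close> by (simp add: scaleR_add_right)
    then have "(k / norm (x - p)) *\<^sub>R Li r - sgn (x - p) = e x"
      by (simp add: sgn_div_norm divide_inverse_commute)
    moreover have "norm (sgn (x - p)) = 1"
      using \<open>x \<noteq> p\<close> by (simp add: norm_sgn)
    ultimately show ?thesis
      using norm_sub_sgn_le[of "sgn (x - p)" "k / norm (x - p)" "Li r"] k by simp
  qed
  then have "\<forall>\<^sub>F x in at p within S. norm (sgn (x - p) - sgn (Li r)) \<le> 2 * norm (e x)"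
    by (auto simp: eventually_at_filter)
  moreover have "((\<lambda>x. 2 * norm (e x)) \<longlongrightarrow> 0) (at p within S)"
    using tendsto_mult_right_zero[OF tendsto_norm_zero[OF e]] .
  ultimately have "((\<lambda>x. sgn (x - p) - sgn (Li r)) \<longlongrightarrow> 0) (at p within S)"
    by (rule Lim_null_comparison)
  then show ?thesis
    by (simp add: LIM_zero_iff)
qed

lemma half_tangent_of_ray_preimage:
  fixes F :: "real^2 \<Rightarrow> real^2"
  assumes "(F has_derivative L) (at p within S)" "F p = 0"
    and "bounded_linear Li" "\<And>h. Li (L h) = h"
    and "\<And>x. x \<in> S \<Longrightarrow> \<exists>k\<ge>0. F x = k *\<^sub>R r"
    and "Li r \<noteq> 0" and "p islimpt S"
  shows "half_tangent S p (sgn (Li r))"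
  using tendsto_sgn_diff_of_ray_preimage[OF assms(1-5)] assms(6,7)
  by (simp add: half_tangent_def norm_sgn sgn_div_norm divide_inverse_commute)

lemma half_tangent_unique:
  assumes "half_tangent S p d" and "half_tangent S p d'"
  shows "d = d'"
  using assms tendsto_unique[of "at p within S"] trivial_limit_within
  unfolding half_tangent_def by blast

lemma islimpt_of_filterlim:
  assumes "filterlim f (at p within S) F" and "F \<noteq> bot"
  shows "p islimpt S"
  using assms filtermap_bot_iff[of f F] trivial_limit_within[of p S]
  unfolding filterlim_def by (metis bot.extremum_uniqueI)

lemma closure_vimage_homeomorphism:
  assumes "homeomorphism U V F G" and "open V" and "y \<in> V" and "y \<in> closure A"
  shows "G y \<in> closure (U \<inter> F -` A)"
proof -
  have "y \<in> top_of_set V closure_of (V \<inter> A)"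
    using assms(2-4) open_Int_closure_subset[of V A]
    by (auto simp: closure_of_subtopology_open)
  moreover have "continuous_on V G"
    using assms(1) by (simp add: homeomorphism_def)
  ultimately have "G y \<in> closure (G ` (V \<inter> A))"
    using continuous_map_image_closure_subset[of "top_of_set V" euclidean G "V \<inter> A"] by auto
  moreover have "G ` (V \<inter> A) \<subseteq> U \<inter> F -` A"
    using assms(1) by (auto simp: homeomorphism_def)
  ultimately show ?thesis
    using closure_mono by blast
qed

lemma mem_frontier_interior:
  assumes "open T" "T \<subseteq> S" "x \<in> closure T" "W \<inter> S = {}" "x \<in> closure W"
  shows "x \<in> frontier (interior S)"
proof -
  have "x \<in> closure (interior S)"
    using assms(1-3) closure_mono interior_maximal by blast
  moreover have "x \<notin> interior S"
    using assms(4,5) open_Int_closure_eq_empty[of "interior S" W] interior_subset by blast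
  ultimately show ?thesis
    by (simp add: frontier_def)
qed

lemma mem_closure_of_half_line:
  fixes y w :: "'a::real_normed_vector"
  assumes "\<And>t. t > 0 \<Longrightarrow> y + t *\<^sub>R w \<in> A"
  shows "y \<in> closure A"
proof (rule Lim_in_closed_set)
  have "((\<lambda>t. y + t *\<^sub>R w) \<longlongrightarrow> y + 0 *\<^sub>R w) (at_right 0)"
    by (intro tendsto_intros)
  then show "((\<lambda>t. y + t *\<^sub>R w) \<longlongrightarrow> y) (at_right 0)"
    by simp
  show "\<forall>\<^sub>F t in at_right 0. y + t *\<^sub>R w \<in> closure A"
    using eventually_at_right_less by (rule eventually_mono) (use assms closure_subset in blast)
qed auto

section \<open>The linear model of the three phases\<close>

definition model_potential :: "real^2 \<Rightarrow> nat \<Rightarrow> real" where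
  "model_potential v j = (if j = 1 then - v $ 1 else if j = 2 then - v $ 2 else 0)"

definition sector :: "nat \<Rightarrow> (real^2) set" where
  "sector j = {v. \<forall>m\<in>Kset. m \<noteq> j \<longrightarrow> model_potential v j \<le> model_potential v m}"

definition open_sector :: "nat \<Rightarrow> (real^2) set" where
  "open_sector j = {v. \<forall>m\<in>Kset. m \<noteq> j \<longrightarrow> model_potential v j < model_potential v m}"

lemma model_potential_phihat:
  assumes "phi 0 = (\<lambda>x. 0)" and "j \<in> Kset"
  shows "model_potential (phihat phi x) j = phi j x"
  using assms by (auto simp: model_potential_def phihat_def Kset_def)

lemma model_potential_add_scaleR:
  "model_potential (u + t *\<^sub>R v) j = model_potential u j + t * model_potential v j"
  by (simp add: model_potential_def)

lemma continuous_on_model_potential: "continuous_on A (\<lambda>v. model_potential v j)"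
  by (cases "j = 1"; cases "j = 2") (simp_all add: model_potential_def continuous_intros)

lemma closed_sector: "closed (sector j)"
  unfolding sector_def Kset_def
  by (simp add: closed_Collect_conj closed_Collect_imp open_Collect_const closed_Collect_le continuous_on_model_potential)

lemma open_open_sector: "open (open_sector j)"
  unfolding open_sector_def Kset_def
  by (simp add: open_Collect_conj open_Collect_imp closed_Collect_const open_Collect_less continuous_on_model_potential)

lemma open_sector_disjoint_sector:
  assumes "j \<in> Kset" and "k \<in> Kset" and "k \<noteq> j"
  shows "open_sector k \<inter> sector j = {}"
proof -
  have "model_potential v k < model_potential v j" if "v \<in> open_sector k" for v
    using that assms(1,3) by (simp add: open_sector_def)
  moreover have "model_potential v j \<le> model_potential v k" if "v \<in> sector j" for v
    using that assms(2,3) by (simp add: sector_def)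
  ultimately show ?thesis
    by force
qed

lemma open_sector_nonempty:
  assumes "j \<in> Kset"
  shows "open_sector j \<noteq> {}"
proof -
  have "vector [-1, -1] \<in> open_sector 0" "vector [1, 0] \<in> open_sector 1" "vector [0, 1] \<in> open_sector 2"
    by (auto simp: open_sector_def model_potential_def Kset_def)
  then show ?thesis
    using assms by (auto simp: Kset_def)
qed

lemma open_sector_subset_sector: "open_sector j \<subseteq> sector j"
  unfolding open_sector_def sector_def by (auto intro: less_imp_le)

lemma closure_open_sector:
  assumes "j \<in> Kset"
  shows "closure (open_sector j) = sector j"
proof
  show "closure (open_sector j) \<subseteq> sector j"
    by (simp add: closure_minimal closed_sector open_sector_subset_sector)
  obtain w where w: "w \<in> open_sector j"
    using open_sector_nonempty[OF assms] by blast
  show "sector j \<subseteq> closure (open_sector j)"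
  proof
    fix y assume y: "y \<in> sector j"
    have "y + t *\<^sub>R w \<in> open_sector j" if "t > 0" for t
      unfolding open_sector_def
    proof (intro CollectI ballI impI)
      fix m assume "m \<in> Kset" "m \<noteq> j"
      then have "model_potential y j \<le> model_potential y m" "model_potential w j < model_potential w m"
        using y w by (simp_all add: sector_def open_sector_def)
      then show "model_potential (y + t *\<^sub>R w) j < model_potential (y + t *\<^sub>R w) m"
        using \<open>t > 0\<close> by (simp add: model_potential_add_scaleR add_le_less_mono)
    qed
    then show "y \<in> closure (open_sector j)"
      by (rule mem_closure_of_half_line)
  qed
qed

definition junction_rays :: "(nat \<times> nat \<times> (real^2)) set" where
  "junction_rays = {(0, 1, vector [0, -1]), (1, 2, vector [1, 1]), (0, 2, vector [-1, 0])}"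

lemma mem_sector_iff:
  "v \<in> sector 0 \<longleftrightarrow> v $ 1 \<le> 0 \<and> v $ 2 \<le> 0"
  "v \<in> sector 1 \<longleftrightarrow> 0 \<le> v $ 1 \<and> v $ 2 \<le> v $ 1"
  "v \<in> sector 2 \<longleftrightarrow> 0 \<le> v $ 2 \<and> v $ 1 \<le> v $ 2"
  by (simp_all add: sector_def model_potential_def Kset_def)

lemma sector_Int_sector_eq_ray:
  assumes "(j, k, r) \<in> junction_rays"
  shows "sector j \<inter> sector k = {s *\<^sub>R r | s. 0 \<le> s}"
proof -
  have ray: "A = {s *\<^sub>R u | s. 0 \<le> s}"
    if "\<And>v. v \<in> A \<Longrightarrow> 0 \<le> c v \<and> v = c v *\<^sub>R u" and "\<And>s. 0 \<le> s \<Longrightarrow> s *\<^sub>R u \<in> A"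
    for A c u
    using that by blast
  from assms consider "j = 0" "k = 1" "r = vector [0, -1]" | "j = 1" "k = 2" "r = vector [1, 1]"
    | "j = 0" "k = 2" "r = vector [-1, 0]"
    by (auto simp: junction_rays_def)
  then show ?thesis
  proof cases
    case 1
    show ?thesis
      unfolding 1 by (rule ray[of _ "\<lambda>v. - v $ 2"]) (simp_all add: mem_sector_iff[simplified] vec_eq_iff forall_2)
  next
    case 2
    show ?thesis
      unfolding 2 by (rule ray[of _ "\<lambda>v. v $ 1"]) (simp_all add: mem_sector_iff[simplified] vec_eq_iff forall_2)
  next
    case 3
    show ?thesis
      unfolding 3 by (rule ray[of _ "\<lambda>v. - v $ 1"]) (simp_all add: mem_sector_iff[simplified] vec_eq_iff forall_2)
  qed
qed

lemma sector_Int_all: "sector 0 \<inter> sector 1 \<inter> sector 2 = {0}"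
  by (auto simp: mem_sector_iff[simplified] vec_eq_iff forall_2)

lemma junction_rays_cases:
  assumes "(j, k, r) \<in> junction_rays"
  shows "j \<in> Kset" "k \<in> Kset" "k \<noteq> j" "r \<noteq> 0"
  using assms by (auto simp: junction_rays_def Kset_def vec_eq_iff forall_2)

section \<open>The chart phihat phi\<close>

lemma smooth2_differentiable: "smooth2 g \<Longrightarrow> g differentiable (at x)"
  by (erule smooth2.cases) auto

lemma smooth2_partial: "smooth2 g \<Longrightarrow> smooth2 (\<lambda>x. frechet_derivative g (at x) (axis i 1))"
  by (erule smooth2.cases) auto

lemma smooth2_continuous_on: "smooth2 g \<Longrightarrow> continuous_on A g"
  by (meson continuous_at_imp_continuous_on differentiable_imp_continuous_within smooth2_differentiable)

lemma phihat_eq_axis: "phihat f x = (f 0 x - f 1 x) *\<^sub>R axis 1 1 + (f 0 x - f 2 x) *\<^sub>R axis 2 1"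
  by (simp add: phihat_def vec_eq_iff forall_2 axis_def)

lemma phihat_has_derivative:
  assumes "\<forall>j\<in>Kset. smooth2 (phi j)"
  shows "(phihat phi has_derivative phihat (\<lambda>j. frechet_derivative (phi j) (at x))) (at x)"
proof -
  have "(phi j has_derivative frechet_derivative (phi j) (at x)) (at x)" if "j \<in> Kset" for j
    using assms that smooth2_differentiable frechet_derivative_works by blast
  then show ?thesis
    unfolding phihat_eq_axis[abs_def]
    by (intro has_derivative_add has_derivative_scaleR_left has_derivative_diff) (auto simp: Kset_def)
qed

lemma continuous_on_phihat:
  assumes "\<forall>j\<in>Kset. smooth2 (phi j)"
  shows "continuous_on A (phihat phi)"
  using phihat_has_derivative[OF assms] has_derivative_continuous
  by (blast intro: continuous_at_imp_continuous_on)

lemma continuous_on_phihat_derivative: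
  assumes smooth: "\<forall>j\<in>Kset. smooth2 (phi j)"
  shows "continuous_on A (\<lambda>x. Blinfun (phihat (\<lambda>j. frechet_derivative (phi j) (at x))))"
proof (rule continuous_on_blinfun_componentwise)
  fix b :: "real^2" assume "b \<in> Basis"
  then obtain i where b: "b = axis i 1"
    by (auto simp: Basis_vec_def)
  have partial: "continuous_on A (\<lambda>x. frechet_derivative (phi j) (at x) (axis i 1))" if "j \<in> Kset" for j
    using smooth that by (blast intro: smooth2_continuous_on smooth2_partial)
  have apply_eq: "blinfun_apply (Blinfun (phihat (\<lambda>j. frechet_derivative (phi j) (at x)))) =
      phihat (\<lambda>j. frechet_derivative (phi j) (at x))" for x
    using phihat_has_derivative[OF smooth] has_derivative_bounded_linear bounded_linear_Blinfun_apply
    by blast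
  show "continuous_on A (\<lambda>x. blinfun_apply (Blinfun (phihat (\<lambda>j. frechet_derivative (phi j) (at x)))) b)"
    unfolding apply_eq unfolding b phihat_eq_axis
    by (intro continuous_on_add continuous_on_scaleR continuous_on_diff continuous_on_const partial)
      (simp_all add: Kset_def)
qed

lemma phihat_local_chart:
  assumes "open D" and smooth: "\<forall>j\<in>Kset. smooth2 (phi j)" and "p \<in> D"
    and inv: "invertible (jacobian (phihat phi) (at p))"
  obtains U V G L Li where "open U" "U \<subseteq> D" "p \<in> U" "open V" "homeomorphism U V (phihat phi) G"
    "(phihat phi has_derivative L) (at p)" "linear Li" "\<And>h. Li (L h) = h" "\<And>y. L (Li y) = y"
proof -
  define DF where "DF x = phihat (\<lambda>j. frechet_derivative (phi j) (at x))" for x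
  have der: "(phihat phi has_derivative DF x) (at x)" for x
    unfolding DF_def using phihat_has_derivative[OF smooth] .
  have DF_apply: "blinfun_apply (Blinfun (DF x)) = DF x" for x
    by (rule bounded_linear_Blinfun_apply[OF has_derivative_bounded_linear[OF der]])
  have "jacobian (phihat phi) (at p) = matrix (DF p)"
    by (simp add: jacobian_def frechet_derivative_at[OF der, symmetric])
  then obtain Li where Li: "linear Li" "DF p \<circ> Li = id" "Li \<circ> DF p = id"
    using inv matrix_invertible[of "DF p"] has_derivative_linear[OF der] by auto
  have inverse: "Blinfun Li o\<^sub>L Blinfun (DF p) = id_blinfun"
  proof (rule blinfun_eqI)
    fix h
    have "bounded_linear Li"
      using Li(1) by (simp add: linear_conv_bounded_linear)
    then show "blinfun_apply (Blinfun Li o\<^sub>L Blinfun (DF p)) h = blinfun_apply id_blinfun h"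
      using pointfree_idE[OF Li(3)] by (simp add: DF_apply bounded_linear_Blinfun_apply)
  qed
  have der_blinfun: "(phihat phi has_derivative blinfun_apply (Blinfun (DF x))) (at x)" for x
    unfolding DF_apply by (rule der)
  have cont: "continuous_on D (\<lambda>x. Blinfun (DF x))"
    unfolding DF_def by (rule continuous_on_phihat_derivative[OF smooth])
  show ?thesis
    by (rule inverse_function_theorem[OF \<open>open D\<close> der_blinfun cont \<open>p \<in> D\<close> inverse],
        rule that[OF _ _ _ _ _ der Li(1) pointfree_idE[OF Li(3)] pointfree_idE[OF Li(2)]])
qed

section \<open>The phases of phi near the triple point\<close>

lemma Omega_eq_interior_sector:
  assumes "phi 0 = (\<lambda>x. 0)" and "j \<in> Kset"
  shows "Omega D phi j = interior (D \<inter> phihat phi -` sector j)"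
  unfolding Omega_def sector_def vimage_def Int_def
  using assms(2) by (simp add: model_potential_phihat[of phi, OF assms(1)])

lemma frontier_Omega_subset_sector:
  assumes "phi 0 = (\<lambda>x. 0)" and "j \<in> Kset" and "continuous_on UNIV (phihat phi)"
  shows "frontier (Omega D phi j) \<subseteq> phihat phi -` sector j"
proof -
  have "frontier (Omega D phi j) \<subseteq> frontier (D \<inter> phihat phi -` sector j)"
    unfolding Omega_eq_interior_sector[where phi = phi, OF assms(1,2)] by (rule frontier_interior_subset)
  also have "\<dots> \<subseteq> closure (D \<inter> phihat phi -` sector j)"
    by (auto simp: frontier_def)
  also have "\<dots> \<subseteq> phihat phi -` sector j"
    using assms(3) closed_sector by (intro closure_minimal) (auto intro: closed_vimage)
  finally show ?thesis .
qed

lemma phihat_eq_0_at_triple_point: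
  assumes "phi 0 = (\<lambda>x. 0)" and "continuous_on UNIV (phihat phi)" and "x \<in> Eset D phi Kset"
  shows "phihat phi x = 0"
proof -
  have "phihat phi x \<in> sector j" if "j \<in> Kset" for j
    using assms(3) frontier_Omega_subset_sector[OF assms(1) that assms(2)] that
    by (auto simp: Eset_def)
  then show ?thesis
    using sector_Int_all by (auto simp: Kset_def)
qed

locale junction_chart =
  fixes D :: "(real^2) set" and phi :: "nat \<Rightarrow> real^2 \<Rightarrow> real" and p :: "real^2"
    and U V :: "(real^2) set" and G L Li :: "real^2 \<Rightarrow> real^2"
  assumes open_D: "open D" and phi_0: "phi 0 = (\<lambda>x. 0)"
    and continuous_phihat: "continuous_on UNIV (phihat phi)"
    and chart: "homeomorphism U V (phihat phi) G" and open_V: "open V" and U_subset: "U \<subseteq> D"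
    and p_in_U: "p \<in> U" and phihat_p: "phihat phi p = 0"
    and derivative: "(phihat phi has_derivative L) (at p)"
    and linear_Li: "linear Li" and Li_L: "\<And>h. Li (L h) = h" and L_Li: "\<And>y. L (Li y) = y"
begin

lemma chart_mem_frontier_Omega:
  assumes "j \<in> Kset" "k \<in> Kset" "k \<noteq> j" and "y \<in> V" "y \<in> sector j" "y \<in> sector k"
  shows "G y \<in> frontier (Omega D phi j)"
proof -
  have near: "G y \<in> closure (D \<inter> phihat phi -` open_sector i)" if "i \<in> Kset" "y \<in> sector i" for i
  proof -
    have "G y \<in> closure (U \<inter> phihat phi -` open_sector i)"
      using closure_vimage_homeomorphism[OF chart open_V \<open>y \<in> V\<close>] closure_open_sector that by auto
    moreover have "U \<inter> phihat phi -` open_sector i \<subseteq> D \<inter> phihat phi -` open_sector i"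
      using U_subset by blast
    ultimately show ?thesis
      using closure_mono by blast
  qed
  have "open (D \<inter> phihat phi -` open_sector j)"
    using open_D open_open_sector continuous_phihat by (simp add: open_Int open_vimage)
  moreover have "D \<inter> phihat phi -` open_sector j \<subseteq> D \<inter> phihat phi -` sector j"
    using open_sector_subset_sector by blast
  moreover have "(D \<inter> phihat phi -` open_sector k) \<inter> (D \<inter> phihat phi -` sector j) = {}"
    using open_sector_disjoint_sector[OF assms(1-3)] by blast
  ultimately show ?thesis
    unfolding Omega_eq_interior_sector[where phi = phi, OF phi_0 \<open>j \<in> Kset\<close>]
    using mem_frontier_interior near assms by blast
qed

lemma chart_ray_mem_Eset:
  assumes "(j, k, r) \<in> junction_rays" and "0 \<le> s" and "s *\<^sub>R r \<in> V"
  shows "G (s *\<^sub>R r) \<in> Eset D phi {j, k}"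
proof -
  have "s *\<^sub>R r \<in> sector j" "s *\<^sub>R r \<in> sector k"
    using sector_Int_sector_eq_ray[OF assms(1)] \<open>0 \<le> s\<close> by blast+
  then show ?thesis
    using chart_mem_frontier_Omega[of j k] chart_mem_frontier_Omega[of k j]
      junction_rays_cases[OF assms(1)] \<open>s *\<^sub>R r \<in> V\<close>
    by (auto simp: Eset_def)
qed

lemma Eset_subset_ray:
  assumes "(j, k, r) \<in> junction_rays" and "x \<in> Eset D phi {j, k}"
  shows "\<exists>s\<ge>0. phihat phi x = s *\<^sub>R r"
proof -
  have "phihat phi x \<in> sector j \<inter> sector k"
    using assms(2) junction_rays_cases[OF assms(1)]
      frontier_Omega_subset_sector[OF phi_0 _ continuous_phihat, of _ D]
    by (auto simp: Eset_def)
  then show ?thesis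
    unfolding sector_Int_sector_eq_ray[OF assms(1)] by blast
qed

lemma islimpt_Eset:
  assumes "(j, k, r) \<in> junction_rays"
  shows "p islimpt Eset D phi {j, k}"
proof (rule islimpt_of_filterlim)
  have G0: "G 0 = p" and "0 \<in> V"
    using chart p_in_U phihat_p unfolding homeomorphism_def by force+
  have "((\<lambda>s. s *\<^sub>R r) \<longlongrightarrow> 0 *\<^sub>R r) (at_right 0)"
    by (intro tendsto_intros)
  then have ray: "((\<lambda>s. s *\<^sub>R r) \<longlongrightarrow> 0) (at_right 0)"
    by simp
  have "isCont G 0"
    using chart open_V \<open>0 \<in> V\<close> by (simp add: homeomorphism_def continuous_on_eq_continuous_at)
  then have "((\<lambda>s. G (s *\<^sub>R r)) \<longlongrightarrow> p) (at_right 0)"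
    using isCont_tendsto_compose[OF _ ray, of G] G0 by simp
  moreover have "\<forall>\<^sub>F s in at_right 0. s *\<^sub>R r \<in> V \<and> 0 < s"
    using topological_tendstoD[OF ray open_V \<open>0 \<in> V\<close>] eventually_at_right_less
    by (rule eventually_conj)
  then have "\<forall>\<^sub>F s in at_right 0. G (s *\<^sub>R r) \<in> Eset D phi {j, k} \<and> G (s *\<^sub>R r) \<noteq> p"
  proof (rule eventually_mono)
    fix s :: real assume s: "s *\<^sub>R r \<in> V \<and> 0 < s"
    have "phihat phi (G (s *\<^sub>R r)) = s *\<^sub>R r"
      using chart s by (simp add: homeomorphism_def)
    then have "G (s *\<^sub>R r) \<noteq> p"
      using s junction_rays_cases(4)[OF assms] phihat_p by auto
    then show "G (s *\<^sub>R r) \<in> Eset D phi {j, k} \<and> G (s *\<^sub>R r) \<noteq> p"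
      using chart_ray_mem_Eset[OF assms] s by simp
  qed
  ultimately show "filterlim (\<lambda>s. G (s *\<^sub>R r)) (at p within Eset D phi {j, k}) (at_right 0)"
    by (simp add: filterlim_at)
qed simp

lemma half_tangent_Eset:
  assumes "(j, k, r) \<in> junction_rays"
  shows "half_tangent (Eset D phi {j, k}) p (sgn (Li r))"
proof (rule half_tangent_of_ray_preimage[where L = L and Li = Li])
  show "(phihat phi has_derivative L) (at p within Eset D phi {j, k})"
    using derivative by (rule has_derivative_at_withinI)
  show "bounded_linear Li"
    using linear_Li by (simp add: linear_conv_bounded_linear)
  show "Li r \<noteq> 0"
    using L_Li[of r] junction_rays_cases(4)[OF assms] linear_0[OF has_derivative_linear[OF derivative]]
    by auto
qed (use phihat_p Li_L Eset_subset_ray[OF assms] islimpt_Eset[OF assms] in auto)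

lemma half_tangents_betas_bounds:
  "(\<exists>d01 d12 d02. half_tangent (Eset D phi {0,1}) p d01 \<and>
      half_tangent (Eset D phi {1,2}) p d12 \<and> half_tangent (Eset D phi {0,2}) p d02) \<and>
   (\<forall>d01 d12 d02. half_tangent (Eset D phi {0,1}) p d01 \<and>
      half_tangent (Eset D phi {1,2}) p d12 \<and> half_tangent (Eset D phi {0,2}) p d02 \<longrightarrow>
      (case betas d01 d12 d02 of (b0, b1, b2) \<Rightarrow>
         max b0 (max b1 b2) < pi \<and> min b0 (min b1 b2) > 0))"
proof (intro conjI allI impI)
  have directions:
    "half_tangent (Eset D phi {0,1}) p (sgn (Li (vector [0, -1])))"
    "half_tangent (Eset D phi {1,2}) p (sgn (Li (vector [1, 1])))"
    "half_tangent (Eset D phi {0,2}) p (sgn (Li (vector [-1, 0])))"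
    by (rule half_tangent_Eset; simp add: junction_rays_def)+
  then show "\<exists>d01 d12 d02. half_tangent (Eset D phi {0,1}) p d01 \<and>
      half_tangent (Eset D phi {1,2}) p d12 \<and> half_tangent (Eset D phi {0,2}) p d02"
    by blast
  fix d01 d12 d02
  assume "half_tangent (Eset D phi {0,1}) p d01 \<and>
      half_tangent (Eset D phi {1,2}) p d12 \<and> half_tangent (Eset D phi {0,2}) p d02"
  then have "d01 = sgn (Li (vector [0, -1]))" "d12 = sgn (Li (vector [1, 1]))"
      "d02 = sgn (Li (vector [-1, 0]))"
    using half_tangent_unique directions by blast+
  moreover have "inj Li"
    by (rule inj_on_inverseI[where g = L]) (rule L_Li)
  ultimately show "case betas d01 d12 d02 of (b0, b1, b2) \<Rightarrow>
      max b0 (max b1 b2) < pi \<and> min b0 (min b1 b2) > 0"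
    using betas_junction_directions[OF linear_Li] by simp
qed

end

theorem theorem5p1:
  fixes D :: "(real^2) set" and phi :: "nat \<Rightarrow> real^2 \<Rightarrow> real" and xhat :: "real^2"
  assumes "open D" and "bounded D"
    and "\<forall>j\<in>Kset. smooth2 (phi j)"
    and "phi 0 = (\<lambda>x. 0)"
    and "xhat \<in> Eset D phi Kset" and "xhat \<in> D"
    and "invertible (jacobian (phihat phi) (at xhat))"
  shows "(\<exists>d01 d12 d02. half_tangent (Eset D phi {0,1}) xhat d01 \<and>
            half_tangent (Eset D phi {1,2}) xhat d12 \<and>
            half_tangent (Eset D phi {0,2}) xhat d02) \<and>
         (\<forall>d01 d12 d02. half_tangent (Eset D phi {0,1}) xhat d01 \<and>
            half_tangent (Eset D phi {1,2}) xhat d12 \<and>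
            half_tangent (Eset D phi {0,2}) xhat d02 \<longrightarrow>
            (case betas d01 d12 d02 of (b0, b1, b2) \<Rightarrow>
               max b0 (max b1 b2) < pi \<and> min b0 (min b1 b2) > 0))"
proof -
  \<comment> \<open>The argument is local at xhat.\<close>
  obtain U V G L Li where chart: "open U" "U \<subseteq> D" "xhat \<in> U" "open V" "homeomorphism U V (phihat phi) G"
    and inverse: "(phihat phi has_derivative L) (at xhat)" "linear Li" "\<And>h. Li (L h) = h" "\<And>y. L (Li y) = y"
    by (rule phihat_local_chart[OF assms(1,3,6,7)]) blast
  have continuous: "continuous_on UNIV (phihat phi)"
    using assms(3) by (rule continuous_on_phihat)
  interpret junction_chart D phi xhat U V G L Li
    using junction_chart.intro[OF assms(1,4) continuous chart(5,4,2,3)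
        phihat_eq_0_at_triple_point[OF assms(4) continuous assms(5)] inverse] .
  show ?thesis
    by (rule half_tangents_betas_bounds)
qed

end
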